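(* Let $\alpha,\beta\in\mathbb{N}\cup\{0\}$ and $1_F\in\mathbb{N}$, and let $n_F=[x^n]\,\frac{1_F\,x}{(1-\alpha x)(1-\beta x)}$ for $n\ge0$. Let $(b_1,\dots,b_k)$ be a composition of $n\in\mathbb{N}$ into $k$ positive parts. Then $$n_F=\Big(\sum_{s=1}^k b_s\Big)_F=\sum_{s=1}^k \alpha^{\,b_{s+1}+\cdots+b_k}\,\beta^{\,b_1+\cdots+b_{s-1}}\,(b_s)_F .$$
   Context: $[x^n]$ denotes the coefficient of $x^n$ in the power series expansion. Empty sums in exponents equal $0$, and $0^0=1$. *)

theory Defs
  imports "HOL-Computational_Algebra.Formal_Power_Series"
begin

definition fnumber :: "nat \<Rightarrow> nat \<Rightarrow> nat \<Rightarrow> nat \<Rightarrow> real" where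
  "fnumber \<alpha> \<beta> oneF n =
     fps_nth (fps_const (real oneF) * fps_X /
              ((1 - fps_const (real \<alpha>) * fps_X) * (1 - fps_const (real \<beta>) * fps_X))) n"

end

theory Submission
  imports Defs
begin

text \<open>Expanding the generating function gives the closed form n_F = 1_F h(n-1), where
  h(m) = sum over i \<le> m of \<alpha>^i \<beta>^(m-i). Splitting this sum at i = m yields the addition law
  (m+n)_F = \<beta>^n m_F + \<alpha>^m n_F, and peeling off the first part of the composition
  gives the expansion by induction.\<close>

lemma inverse_one_minus_const_X:
  "inverse (1 - fps_const (a::'a::field) * fps_X) = Abs_fps (\<lambda>n. a ^ n)"
proof (rule fps_inverse_unique)
  have "Abs_fps (\<lambda>n. a ^ n) * (1 - fps_const a * fps_X)
      = Abs_fps (\<lambda>n. a ^ n) - fps_const a * (fps_X * Abs_fps (\<lambda>n. a ^ n))"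
    by (simp add: algebra_simps)
  also have "\<dots> = 1"
  proof (rule fps_ext)
    show "fps_nth (Abs_fps (\<lambda>n. a ^ n) - fps_const a * (fps_X * Abs_fps (\<lambda>n. a ^ n))) k = fps_nth 1 k"
      for k by (cases k) simp_all
  qed
  finally show "(1 - fps_const a * fps_X) * Abs_fps (\<lambda>n. a ^ n) = 1"
    by (simp add: mult.commute)
qed

definition complete_hom2 :: "'a::comm_semiring_1 \<Rightarrow> 'a \<Rightarrow> nat \<Rightarrow> 'a" where
  "complete_hom2 a b n = (\<Sum>i=0..n. a ^ i * b ^ (n - i))"

lemma complete_hom2_add:
  "complete_hom2 a b (m + n + 1) = b ^ (n + 1) * complete_hom2 a b m + a ^ (m + 1) * complete_hom2 a b n"
proof -
  let ?t = "\<lambda>i. a ^ i * b ^ (m + n + 1 - i)"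
  have "complete_hom2 a b (m + n + 1) = (\<Sum>i=0..m. ?t i) + (\<Sum>i=Suc m..m + n + 1. ?t i)"
    unfolding complete_hom2_def using sum.ub_add_nat[of 0 m ?t "n + 1"] by (simp add: add.assoc)
  also have "(\<Sum>i=0..m. ?t i) = b ^ (n + 1) * complete_hom2 a b m"
    unfolding complete_hom2_def sum_distrib_left
  proof (rule sum.cong)
    show "?t i = b ^ (n + 1) * (a ^ i * b ^ (m - i))" if "i \<in> {0..m}" for i
    proof -
      from that have "?t i = a ^ i * b ^ ((m - i) + (n + 1))" by (simp add: Suc_diff_le)
      then show ?thesis by (simp only: power_add mult_ac)
    qed
  qed simp
  also have "(\<Sum>i=Suc m..m + n + 1. ?t i) = (\<Sum>j=0..n. ?t (j + Suc m))"
    using sum.shift_bounds_cl_nat_ivl[of ?t 0 "Suc m" n] by (simp add: add.commute)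
  also have "\<dots> = a ^ (m + 1) * complete_hom2 a b n"
    unfolding complete_hom2_def sum_distrib_left
    by (rule sum.cong) (simp_all add: power_add mult_ac)
  finally show ?thesis .
qed

lemma fnumber_eq_complete_hom2:
  "fnumber \<alpha> \<beta> c n = (if n = 0 then 0 else real c * complete_hom2 (real \<alpha>) (real \<beta>) (n - 1))"
proof -
  let ?A = "Abs_fps (\<lambda>n. real \<alpha> ^ n)" and ?B = "Abs_fps (\<lambda>n. real \<beta> ^ n)"
  have unit: "fps_nth ((1 - fps_const (real \<alpha>) * fps_X) * (1 - fps_const (real \<beta>) * fps_X)) 0 \<noteq> 0"
    by simp
  have "fps_const (real c) * fps_X /
          ((1 - fps_const (real \<alpha>) * fps_X) * (1 - fps_const (real \<beta>) * fps_X))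
      = fps_const (real c) * (fps_X * (?A * ?B))"
    by (simp add: fps_divide_unit[OF unit] fps_inverse_mult inverse_one_minus_const_X mult.assoc)
  moreover have "fps_nth (?A * ?B) m = complete_hom2 (real \<alpha>) (real \<beta>) m" for m
    by (simp add: fps_mult_nth complete_hom2_def)
  ultimately show ?thesis
    unfolding fnumber_def by (cases n) simp_all
qed

lemma fnumber_add:
  "fnumber \<alpha> \<beta> c (m + n) = real \<beta> ^ n * fnumber \<alpha> \<beta> c m + real \<alpha> ^ m * fnumber \<alpha> \<beta> c n"
proof (cases "m = 0 \<or> n = 0")
  case True
  then show ?thesis by (auto simp: fnumber_eq_complete_hom2)
next
  case False
  then obtain m' n' where "m = Suc m'" "n = Suc n'"
    by (meson not0_implies_Suc)
  then show ?thesis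
    using complete_hom2_add[of "real \<alpha>" "real \<beta>" m' n']
    by (simp add: fnumber_eq_complete_hom2 algebra_simps)
qed

lemma fnumber_sum_list:
  "fnumber \<alpha> \<beta> c (sum_list bs) =
     (\<Sum>s<length bs. real \<alpha> ^ sum_list (drop (Suc s) bs) * real \<beta> ^ sum_list (take s bs)
                     * fnumber \<alpha> \<beta> c (bs ! s))"
proof (induction bs)
  case Nil
  then show ?case by (simp add: fnumber_eq_complete_hom2)
next
  case (Cons b bs)
  have "fnumber \<alpha> \<beta> c (sum_list (b # bs)) = fnumber \<alpha> \<beta> c (sum_list bs + b)"
    by (simp add: add.commute)
  also have "\<dots> = real \<beta> ^ b * fnumber \<alpha> \<beta> c (sum_list bs) + real \<alpha> ^ sum_list bs * fnumber \<alpha> \<beta> c b"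
    by (rule fnumber_add)
  finally show ?case
    by (simp add: Cons.IH lessThan_Suc_eq_insert_0 sum.reindex sum_distrib_left algebra_simps power_add)
qed

theorem proposition1:
  fixes \<alpha> \<beta> oneF n :: nat and bs :: "nat list"
  assumes "oneF \<ge> 1"
    and "n \<ge> 1"
    and "\<forall>b\<in>set bs. b > 0"
    and "sum_list bs = n"
  shows "fnumber \<alpha> \<beta> oneF n = fnumber \<alpha> \<beta> oneF (sum_list bs)
       \<and> fnumber \<alpha> \<beta> oneF (sum_list bs) =
         (\<Sum>s<length bs. real \<alpha> ^ sum_list (drop (Suc s) bs)
                         * real \<beta> ^ sum_list (take s bs)
                         * fnumber \<alpha> \<beta> oneF (bs ! s))"
  using assms(4) fnumber_sum_list[of \<alpha> \<beta> oneF bs] by simp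

end
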